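(* Let $\Lambda$ be a row-finite $2$-graph with no sources, and suppose $(\alpha_1,\alpha_2,\beta_1,\beta_2)$ is a $(1,1)$-aperiodic quartet at $u\in\Lambda^0$. Then $\Lambda$ has no local periodicity at $u$.
   Context: A $k$-graph is a countable category $\Lambda$ with a functor $d:\Lambda\to\mathbb{N}^k$ satisfying the factorization property: whenever $d(\lambda)=m+n$ there are unique $\mu,\nu$ with $\lambda=\mu\nu$, $d(\mu)=m$, $d(\nu)=n$. $\Lambda^n=d^{-1}(n)$, $\Lambda^0$ the vertices, $r,s$ range and source, $v\Lambda=\{\lambda:r(\lambda)=v\}$, $v\Lambda^n w=\{\lambda: r(\lambda)=v, d(\lambda)=n, s(\lambda)=w\}$. Row-finite: each $v\Lambda^n$ finite; no sources: $v\Lambda^{e_i}\ne\emptyset$ for all $v,i$ ($e_1,e_2$ standard generators of $\mathbb{N}^2$). For $0\le m\le n\le d(\lambda)$, $\lambda(m,n)$ is the unique path with $\lambda=\lambda'\lambda(m,n)\lambda''$, $d(\lambda')=m$, $d(\lambda(m,n))=n-m$. $\Lambda$ has no local periodicity at $v$ if for each $m\neq n\in\mathbb{N}^k$ there is $\lambda\in v\Lambda$ with $d(\lambda)\ge m\vee n$ and $\lambda(m,m+d(\lambda)-(m\vee n))\neq\lambda(n,n+d(\lambda)-(m\vee n))$ ($\vee$ = coordinatewise max). For positive integers $a,b$, an $(a,b)$-aperiodic quartet at $u$ is a tuple $(\alpha_1,\alpha_2,\beta_1,\beta_2)$ with $\alpha_1\neq\alpha_2$ in $u\Lambda^{ae_1}u$,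 $\beta_1\neq\beta_2$ in $u\Lambda^{be_2}u$, such that $\beta_2\alpha_1=\alpha_1\beta_2$, $\beta_2\alpha_2=\alpha_2\beta_2$, $\beta_1\alpha_1=\alpha_2\beta_1$, $\beta_1\alpha_2=\alpha_1\beta_1$. *)

theory Defs
  imports Main "HOL-Library.Product_Plus" "HOL-Library.Product_Order" "HOL-Library.Countable_Set"
begin

text \<open>A 2-graph: a countable small category (morphisms Mor, identity morphisms = vertices Obj,
 range r, source s, composition comp) with a degree functor d into N^2 = nat \<times> nat
 satisfying the unique factorization property.\<close>

record 'm twograph =
  Mor  :: "'m set"
  Obj  :: "'m set"
  rng  :: "'m \<Rightarrow> 'm"
  src  :: "'m \<Rightarrow> 'm"
  comp :: "'m \<Rightarrow> 'm \<Rightarrow> 'm"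
  deg  :: "'m \<Rightarrow> nat \<times> nat"

definition e1 :: "nat \<times> nat" where "e1 = (1, 0)"
definition e2 :: "nat \<times> nat" where "e2 = (0, 1)"

definition is_2graph :: "'m twograph \<Rightarrow> bool" where
  "is_2graph G \<longleftrightarrow>
     countable (Mor G) \<and> Obj G \<subseteq> Mor G \<and>
     (\<forall>x\<in>Mor G. rng G x \<in> Obj G \<and> src G x \<in> Obj G) \<and>
     (\<forall>v\<in>Obj G. rng G v = v \<and> src G v = v) \<and>
     (\<forall>x\<in>Mor G. \<forall>y\<in>Mor G. src G x = rng G y \<longrightarrow>
        comp G x y \<in> Mor G \<and> rng G (comp G x y) = rng G x \<and> src G (comp G x y) = src G y) \<and>
     (\<forall>x\<in>Mor G. comp G (rng G x) x = x \<and> comp G x (src G x) = x) \<and>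
     (\<forall>x\<in>Mor G. \<forall>y\<in>Mor G. \<forall>z\<in>Mor G. src G x = rng G y \<longrightarrow> src G y = rng G z \<longrightarrow>
        comp G (comp G x y) z = comp G x (comp G y z)) \<and>
     (\<forall>v\<in>Obj G. deg G v = 0) \<and>
     (\<forall>x\<in>Mor G. \<forall>y\<in>Mor G. src G x = rng G y \<longrightarrow> deg G (comp G x y) = deg G x + deg G y) \<and>
     (\<forall>l\<in>Mor G. \<forall>m n. deg G l = m + n \<longrightarrow>
        (\<exists>!p. fst p \<in> Mor G \<and> snd p \<in> Mor G \<and> src G (fst p) = rng G (snd p) \<and>
              l = comp G (fst p) (snd p) \<and> deg G (fst p) = m \<and> deg G (snd p) = n))"

definition row_finite :: "'m twograph \<Rightarrow> bool" where
  "row_finite G \<longleftrightarrow> (\<forall>v\<in>Obj G. \<forall>n. finite {l\<in>Mor G. rng G l = v \<and> deg G l = n})"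

definition no_sources :: "'m twograph \<Rightarrow> bool" where
  "no_sources G \<longleftrightarrow> (\<forall>v\<in>Obj G. \<forall>i\<in>{e1, e2}. \<exists>l\<in>Mor G. rng G l = v \<and> deg G l = i)"

text \<open>The segment l(m,n) for 0 \<le> m \<le> n \<le> d(l).\<close>
definition seg :: "'m twograph \<Rightarrow> 'm \<Rightarrow> nat \<times> nat \<Rightarrow> nat \<times> nat \<Rightarrow> 'm" where
  "seg G l m n = (THE x. x \<in> Mor G \<and> deg G x = n - m \<and>
     (\<exists>a\<in>Mor G. \<exists>b\<in>Mor G. deg G a = m \<and> src G a = rng G x \<and> src G x = rng G b \<and>
        l = comp G (comp G a x) b))"

definition no_local_periodicity_at :: "'m twograph \<Rightarrow> 'm \<Rightarrow> bool" where
  "no_local_periodicity_at G v \<longleftrightarrow>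
     (\<forall>m n :: nat \<times> nat. m \<noteq> n \<longrightarrow>
        (\<exists>l\<in>Mor G. rng G l = v \<and> sup m n \<le> deg G l \<and>
           seg G l m (m + deg G l - sup m n) \<noteq> seg G l n (n + deg G l - sup m n)))"

definition aperiodic_quartet ::
  "'m twograph \<Rightarrow> nat \<Rightarrow> nat \<Rightarrow> 'm \<Rightarrow> 'm \<Rightarrow> 'm \<Rightarrow> 'm \<Rightarrow> 'm \<Rightarrow> bool" where
  "aperiodic_quartet G a b u al1 al2 be1 be2 \<longleftrightarrow>
     u \<in> Obj G \<and>
     (\<forall>x\<in>{al1, al2}. x \<in> Mor G \<and> rng G x = u \<and> src G x = u \<and> deg G x = (a, 0)) \<and>
     (\<forall>x\<in>{be1, be2}. x \<in> Mor G \<and> rng G x = u \<and> src G x = u \<and> deg G x = (0, b)) \<and>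
     al1 \<noteq> al2 \<and> be1 \<noteq> be2 \<and>
     comp G be2 al1 = comp G al1 be2 \<and> comp G be2 al2 = comp G al2 be2 \<and>
     comp G be1 al1 = comp G al2 be1 \<and> comp G be1 al2 = comp G al1 be1"

end

theory Submission
  imports Defs
begin

text \<open>All segments that matter are loops at u, where b2 commutes with a1, a2 and
  conjugation by b1 swaps a1 and a2. Given m \<noteq> n with, say, m1 < n1, the loop
  a1^n1 b2^M a2 (M = max m2 n2) can be rewritten both as (a factor of degree n) a2 (rest) and as
  (a factor of degree m) a1 (rest); by unique factorization its segments of degree e1 at n and
  at m are therefore a2 and a1. If m2 < n2, the loop b2^n2 a1^M b1 (M = max m1 n1) separates m
  and n in the same way, by b1 and b2.\<close>

lemma is_2graph_comp:
  assumes "is_2graph G" "x \<in> Mor G" "y \<in> Mor G" "src G x = rng G y"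
  shows "comp G x y \<in> Mor G" "rng G (comp G x y) = rng G x" "src G (comp G x y) = src G y"
    "deg G (comp G x y) = deg G x + deg G y"
  using assms unfolding is_2graph_def by blast+

lemma is_2graph_factorization_unique:
  assumes "is_2graph G" "l \<in> Mor G"
    and "a \<in> Mor G" "b \<in> Mor G" "src G a = rng G b" "l = comp G a b"
    and "a' \<in> Mor G" "b' \<in> Mor G" "src G a' = rng G b'" "l = comp G a' b'"
    and "deg G a = deg G a'" "deg G b = deg G b'"
  shows "a = a'" "b = b'"
proof -
  have "deg G l = deg G a + deg G b"
    using is_2graph_comp(4)[OF assms(1,3-5)] assms(6) by simp
  then have "\<exists>!p. fst p \<in> Mor G \<and> snd p \<in> Mor G \<and> src G (fst p) = rng G (snd p) \<and>
      l = comp G (fst p) (snd p) \<and> deg G (fst p) = deg G a \<and> deg G (snd p) = deg G b"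
    using assms(1,2) unfolding is_2graph_def by blast
  then have "(a, b) = (a', b')"
    using assms(3-12) by (metis fst_conv snd_conv)
  then show "a = a'" "b = b'" by simp_all
qed

lemma seg_comp3:
  assumes G: "is_2graph G"
    and mor: "a \<in> Mor G" "x \<in> Mor G" "b \<in> Mor G"
    and composable: "src G a = rng G x" "src G x = rng G b"
  shows "seg G (comp G (comp G a x) b) (deg G a) (deg G a + deg G x) = x"
proof -
  let ?l = "comp G (comp G a x) b"
  have add_diff: "p + q - p = q" for p q :: "nat \<times> nat"
    by (cases p, cases q) simp
  have ax: "comp G a x \<in> Mor G" "src G (comp G a x) = src G x"
    "deg G (comp G a x) = deg G a + deg G x"
    using is_2graph_comp[OF G mor(1,2) composable(1)] by simp_all
  have l: "?l \<in> Mor G"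
    using is_2graph_comp(1)[OF G ax(1) mor(3)] ax(2) composable(2) by simp
  show ?thesis
    unfolding seg_def add_diff
  proof (rule the_equality)
    fix y assume "y \<in> Mor G \<and> deg G y = deg G x \<and> (\<exists>a'\<in>Mor G. \<exists>b'\<in>Mor G.
        deg G a' = deg G a \<and> src G a' = rng G y \<and> src G y = rng G b' \<and> ?l = comp G (comp G a' y) b')"
    then obtain a' b' where y: "y \<in> Mor G" "deg G y = deg G x" "a' \<in> Mor G" "b' \<in> Mor G"
      "deg G a' = deg G a" "src G a' = rng G y" "src G y = rng G b'" "?l = comp G (comp G a' y) b'"
      by blast
    have a'y: "comp G a' y \<in> Mor G" "src G (comp G a' y) = src G y"
      "deg G (comp G a' y) = deg G a + deg G x"
      using is_2graph_comp[OF G y(3,1,6)] y(2,5) by simp_all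
    have "deg G ?l = deg G a + deg G x + deg G b" "deg G ?l = deg G a + deg G x + deg G b'"
      using is_2graph_comp(4)[OF G ax(1) mor(3)] is_2graph_comp(4)[OF G a'y(1) y(4)]
        ax a'y composable(2) y(7,8) by simp_all
    then have "deg G b = deg G b'" by simp
    then have "comp G a x = comp G a' y"
      using is_2graph_factorization_unique(1)[OF G l ax(1) mor(3) _ refl a'y(1) y(4) _ y(8)]
        ax a'y composable(2) y(7) by simp
    then show "y = x"
      using is_2graph_factorization_unique(2)[OF G ax(1) mor(1,2) composable(1) refl y(3,1,6)]
        y(2,5) by simp
  qed (use mor composable in blast)
qed

locale vertex_loops =
  fixes G :: "'m twograph" and u :: 'm
  assumes two_graph: "is_2graph G" and vertex: "u \<in> Obj G"
begin

abbreviation cmp :: "'m \<Rightarrow> 'm \<Rightarrow> 'm" (infixr "\<cdot>" 70)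
  where "x \<cdot> y \<equiv> comp G x y"

definition loops :: "'m set"
  where "loops = {x \<in> Mor G. rng G x = u \<and> src G x = u}"

definition lpow :: "'m \<Rightarrow> nat \<Rightarrow> 'm"
  where "lpow x k = (((\<cdot>) x) ^^ k) u"

lemma lpow_0 [simp]: "lpow x 0 = u"
  and lpow_Suc: "lpow x (Suc k) = x \<cdot> lpow x k"
  by (simp_all add: lpow_def)

lemma loopsD: "x \<in> loops \<Longrightarrow> x \<in> Mor G" "x \<in> loops \<Longrightarrow> rng G x = u" "x \<in> loops \<Longrightarrow> src G x = u"
  by (simp_all add: loops_def)

lemma vertex_in_loops [simp]: "u \<in> loops"
  using two_graph vertex unfolding is_2graph_def loops_def by auto

lemma loops_comp [simp]: "x \<in> loops \<Longrightarrow> y \<in> loops \<Longrightarrow> x \<cdot> y \<in> loops"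
  using is_2graph_comp[OF two_graph] by (simp add: loops_def)

lemma deg_comp: "x \<in> loops \<Longrightarrow> y \<in> loops \<Longrightarrow> deg G (x \<cdot> y) = deg G x + deg G y"
  using is_2graph_comp(4)[OF two_graph] by (simp add: loops_def)

lemma comp_assoc: "x \<in> loops \<Longrightarrow> y \<in> loops \<Longrightarrow> z \<in> loops \<Longrightarrow> (x \<cdot> y) \<cdot> z = x \<cdot> y \<cdot> z"
  using two_graph unfolding is_2graph_def loops_def by auto

lemma vertex_comp [simp]: "x \<in> loops \<Longrightarrow> u \<cdot> x = x"
  and comp_vertex [simp]: "x \<in> loops \<Longrightarrow> x \<cdot> u = x"
  using two_graph unfolding is_2graph_def loops_def by force+

lemma lpow_in_loops [simp]: "x \<in> loops \<Longrightarrow> lpow x k \<in> loops"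
  by (induction k) (simp_all add: lpow_Suc)

lemma lpow_1 [simp]: "x \<in> loops \<Longrightarrow> lpow x (Suc 0) = x"
  by (simp add: lpow_Suc)

lemma lpow_add: "x \<in> loops \<Longrightarrow> lpow x (i + j) = lpow x i \<cdot> lpow x j"
  by (induction i) (simp_all add: lpow_Suc comp_assoc)

lemma deg_lpow: "x \<in> loops \<Longrightarrow> deg G (lpow x k) = (k * fst (deg G x), k * snd (deg G x))"
proof (induction k)
  case 0
  then show ?case using two_graph vertex unfolding is_2graph_def by (simp add: zero_prod_def)
next
  case (Suc k)
  then show ?case by (simp add: lpow_Suc deg_comp prod_eq_iff)
qed

lemma lpow_twist:
  assumes "x \<in> loops" "y \<in> loops" "z \<in> loops" "x \<cdot> y = y \<cdot> z"
  shows "lpow x k \<cdot> y = y \<cdot> lpow z k"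
proof (induction k)
  case (Suc k)
  have "lpow x (Suc k) \<cdot> y = x \<cdot> lpow x k \<cdot> y"
    using assms by (simp add: lpow_Suc comp_assoc)
  also have "\<dots> = x \<cdot> y \<cdot> lpow z k"
    using Suc by simp
  also have "\<dots> = y \<cdot> lpow z (Suc k)"
    using assms by (simp add: lpow_Suc flip: comp_assoc)
  finally show ?case .
qed (use assms in simp)

lemma lpow_commute:
  assumes "x \<in> loops" "y \<in> loops" "x \<cdot> y = y \<cdot> x"
  shows "lpow x i \<cdot> lpow y j = lpow y j \<cdot> lpow x i"
proof -
  have "lpow x i \<cdot> y = y \<cdot> lpow x i"
    using lpow_twist assms by blast
  then show ?thesis
    using lpow_twist[of y "lpow x i" y j] assms by simp
qed

lemma comp_left_commute:
  assumes "x \<in> loops" "y \<in> loops" "z \<in> loops" "x \<cdot> y = y \<cdot> x"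
  shows "x \<cdot> y \<cdot> z = y \<cdot> x \<cdot> z"
  using assms by (simp flip: comp_assoc)

lemma seg_loops:
  assumes "p \<in> loops" "x \<in> loops" "q \<in> loops"
  shows "seg G (p \<cdot> x \<cdot> q) (deg G p) (deg G p + deg G x) = x"
  using seg_comp3[OF two_graph, of p x q] assms by (simp add: loopsD comp_assoc)

end

locale unit_quartet =
  fixes G :: "'m twograph" and u a1 a2 b1 b2 :: 'm
  assumes two_graph: "is_2graph G" and quartet: "aperiodic_quartet G 1 1 u a1 a2 b1 b2"
begin

sublocale vertex_loops G u
proof
  show "is_2graph G" by (rule two_graph)
  show "u \<in> Obj G" using quartet by (simp add: aperiodic_quartet_def)
qed

lemma generators [simp]: "a1 \<in> loops" "a2 \<in> loops" "b1 \<in> loops" "b2 \<in> loops"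
  and deg_generators [simp]:
    "deg G a1 = (1, 0)" "deg G a2 = (1, 0)" "deg G b1 = (0, 1)" "deg G b2 = (0, 1)"
  and generators_distinct: "a1 \<noteq> a2" "b1 \<noteq> b2"
  and relations: "b2 \<cdot> a1 = a1 \<cdot> b2" "b2 \<cdot> a2 = a2 \<cdot> b2" "b1 \<cdot> a1 = a2 \<cdot> b1" "b1 \<cdot> a2 = a1 \<cdot> b1"
  using quartet unfolding aperiodic_quartet_def loops_def by auto

lemma deg_lpow_a1 [simp]: "deg G (lpow a1 k) = (k, 0)"
  and deg_lpow_b2 [simp]: "deg G (lpow b2 k) = (0, k)"
  by (simp_all add: deg_lpow)

lemma deg_corner: "deg G (lpow a1 i \<cdot> lpow b2 j) = (i, j)"
  and deg_corner': "deg G (lpow b2 j \<cdot> lpow a1 i) = (i, j)"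
  by (simp_all add: deg_comp)

lemma lpow_b2_commute: "x \<in> {a1, a2} \<Longrightarrow> lpow x i \<cdot> lpow b2 j = lpow b2 j \<cdot> lpow x i"
  using lpow_commute[of x b2] relations by auto

lemma a2_lpow_b2: "a2 \<cdot> lpow b2 j = lpow b2 j \<cdot> a2"
  using lpow_b2_commute[of a2 1 j] by simp

lemma lpow_a1_b1: "lpow a1 i \<cdot> b1 = b1 \<cdot> lpow a2 i"
  using lpow_twist[of a1 b1 a2] relations by simp

lemma separating_loop_e1:
  assumes "fst m < fst n"
  shows "\<exists>l\<in>loops. deg G l = sup m n + e1 \<and> seg G l m (m + e1) \<noteq> seg G l n (n + e1)"
proof -
  obtain m1 m2 n1 n2 where mn: "m = (m1, m2)" "n = (n1, n2)"
    by (cases m, cases n)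
  define M where "M = max m2 n2"
  define l where "l = lpow a1 n1 \<cdot> lpow b2 M \<cdot> a2"
  obtain k where n1: "n1 = m1 + Suc k"
    using assms mn less_iff_Suc_add by auto
  have deg_l: "deg G l = sup m n + e1"
    using assms by (simp add: l_def mn e1_def M_def deg_comp sup_prod_def sup_nat_def)
  have "l = (lpow a1 n1 \<cdot> lpow b2 n2) \<cdot> a2 \<cdot> lpow b2 (M - n2)"
  proof -
    have "l = lpow a1 n1 \<cdot> lpow b2 n2 \<cdot> lpow b2 (M - n2) \<cdot> a2"
      using lpow_add[of b2 n2 "M - n2"] by (simp add: l_def M_def comp_assoc)
    also have "\<dots> = lpow a1 n1 \<cdot> lpow b2 n2 \<cdot> a2 \<cdot> lpow b2 (M - n2)"
      by (simp add: a2_lpow_b2)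
    finally show ?thesis by (simp add: comp_assoc)
  qed
  then have seg_n: "seg G l n (n + e1) = a2"
    using seg_loops[of "lpow a1 n1 \<cdot> lpow b2 n2" a2] by (simp add: mn e1_def deg_corner)
  have "l = (lpow a1 m1 \<cdot> lpow b2 m2) \<cdot> a1 \<cdot> lpow a1 k \<cdot> lpow b2 (M - m2) \<cdot> a2"
  proof -
    have "l = lpow a1 m1 \<cdot> lpow a1 (Suc k) \<cdot> lpow b2 m2 \<cdot> lpow b2 (M - m2) \<cdot> a2"
      using lpow_add[of a1 m1 "Suc k"] lpow_add[of b2 m2 "M - m2"]
      by (simp add: l_def n1 M_def comp_assoc)
    also have "\<dots> = lpow a1 m1 \<cdot> lpow b2 m2 \<cdot> lpow a1 (Suc k) \<cdot> lpow b2 (M - m2) \<cdot> a2"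
      using comp_left_commute[OF _ _ _ lpow_b2_commute[of a1 "Suc k" m2]] by simp
    finally show ?thesis by (simp add: lpow_Suc comp_assoc)
  qed
  then have seg_m: "seg G l m (m + e1) = a1"
    using seg_loops[of "lpow a1 m1 \<cdot> lpow b2 m2" a1] by (simp add: mn e1_def deg_corner)
  show ?thesis
    using deg_l seg_m seg_n generators_distinct by (auto simp: l_def)
qed

lemma separating_loop_e2:
  assumes "snd m < snd n"
  shows "\<exists>l\<in>loops. deg G l = sup m n + e2 \<and> seg G l m (m + e2) \<noteq> seg G l n (n + e2)"
proof -
  obtain m1 m2 n1 n2 where mn: "m = (m1, m2)" "n = (n1, n2)"
    by (cases m, cases n)
  define M where "M = max m1 n1"
  define l where "l = lpow b2 n2 \<cdot> lpow a1 M \<cdot> b1"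
  obtain k where n2: "n2 = m2 + Suc k"
    using assms mn less_iff_Suc_add by auto
  have deg_l: "deg G l = sup m n + e2"
    using assms by (simp add: l_def mn e2_def M_def deg_comp sup_prod_def sup_nat_def)
  have "l = (lpow b2 n2 \<cdot> lpow a1 n1) \<cdot> b1 \<cdot> lpow a2 (M - n1)"
    using lpow_add[of a1 n1 "M - n1"]
    by (simp add: l_def M_def comp_assoc lpow_a1_b1)
  then have seg_n: "seg G l n (n + e2) = b1"
    using seg_loops[of "lpow b2 n2 \<cdot> lpow a1 n1" b1] by (simp add: mn e2_def deg_corner')
  have "l = (lpow b2 m2 \<cdot> lpow a1 m1) \<cdot> b2 \<cdot> lpow b2 k \<cdot> lpow a1 (M - m1) \<cdot> b1"
  proof -
    have "l = lpow b2 m2 \<cdot> lpow b2 (Suc k) \<cdot> lpow a1 m1 \<cdot> lpow a1 (M - m1) \<cdot> b1"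
      using lpow_add[of b2 m2 "Suc k"] lpow_add[of a1 m1 "M - m1"]
      by (simp add: l_def n2 M_def comp_assoc)
    also have "\<dots> = lpow b2 m2 \<cdot> lpow a1 m1 \<cdot> lpow b2 (Suc k) \<cdot> lpow a1 (M - m1) \<cdot> b1"
      using comp_left_commute[OF _ _ _ lpow_b2_commute[of a1 m1 "Suc k"]] by simp
    finally show ?thesis by (simp add: lpow_Suc comp_assoc)
  qed
  then have seg_m: "seg G l m (m + e2) = b2"
    using seg_loops[of "lpow b2 m2 \<cdot> lpow a1 m1" b2] by (simp add: mn e2_def deg_corner')
  show ?thesis
    using deg_l seg_m seg_n generators_distinct by (auto simp: l_def)
qed

lemma separating_loop:
  assumes "m \<noteq> n"
  obtains l e where "l \<in> loops" "deg G l = sup m n + e" "seg G l m (m + e) \<noteq> seg G l n (n + e)"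
proof -
  have "fst m < fst n \<or> fst n < fst m \<or> snd m < snd n \<or> snd n < snd m"
    using assms by (cases m, cases n) auto
  then show ?thesis
    using separating_loop_e1[of m n] separating_loop_e1[of n m]
      separating_loop_e2[of m n] separating_loop_e2[of n m] that
    by (metis sup.commute)
qed

lemma no_local_periodicity: "no_local_periodicity_at G u"
  unfolding no_local_periodicity_at_def
proof (intro allI impI)
  fix m n :: "nat \<times> nat"
  assume "m \<noteq> n"
  then obtain l e where l: "l \<in> loops" "deg G l = sup m n + e"
    and seg_l: "seg G l m (m + e) \<noteq> seg G l n (n + e)"
    by (rule separating_loop)
  have shift: "p + (sup m n + e) - sup m n = p + e" for p :: "nat \<times> nat"
    by (cases p, cases "sup m n", cases e) simp
  have "sup m n \<le> sup m n + e"
    by (cases "sup m n", cases e) simp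
  then show "\<exists>l\<in>Mor G. rng G l = u \<and> sup m n \<le> deg G l \<and>
      seg G l m (m + deg G l - sup m n) \<noteq> seg G l n (n + deg G l - sup m n)"
    using l seg_l by (intro bexI[of _ l]) (simp_all add: shift loopsD)
qed

end

theorem theorem3p5:
  fixes G :: "'m twograph" and u al1 al2 be1 be2 :: 'm
  assumes "is_2graph G" and "row_finite G" and "no_sources G"
    and "aperiodic_quartet G 1 1 u al1 al2 be1 be2"
  shows "no_local_periodicity_at G u"
proof -
  interpret unit_quartet G u al1 al2 be1 be2
    using assms(1,4) by unfold_locales
  show ?thesis by (rule no_local_periodicity)
qed

end
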